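(* Let $A,L$ be real symmetric $n\times n$ matrices such that the real Lie algebra generated by $iA$ and $iL$ equals $u(n)$. Let $\mathcal{S}$ be the real linear span of all matrices of the form $ad_{iA}^{k_1}\, ad_{iL}^{k_2}\cdots ad_{iA}^{k_{s-1}}\, ad_{iL}^{k_s}\,[iA,iL]$, where $s$ and $k_1,\dots,k_s$ range over nonnegative integers. Then $\mathcal{S}=su(n)$.
   Context: $ad_X(Y):=[X,Y]=XY-YX$. The real Lie algebra generated by a set of matrices is the smallest real vector space containing them and closed under commutators. $u(n)$ is the real Lie algebra of $n\times n$ complex skew-Hermitian matrices, and $su(n)$ is the real Lie algebra of $n\times n$ complex skew-Hermitian matrices with zero trace. *)

theory Defs
  imports "HOL-Analysis.Analysis"
begin

type_synonym 'n cmat = "complex^'n^'n"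

definition comm :: "'n::finite cmat \<Rightarrow> 'n cmat \<Rightarrow> 'n cmat" where
  "comm X Y = X ** Y - Y ** X"

definition ad :: "'n::finite cmat \<Rightarrow> 'n cmat \<Rightarrow> 'n cmat" where
  "ad X Y = comm X Y"

definition imat :: "real^'n^'n \<Rightarrow> complex^'n^'n" where
  "imat A = (\<chi> i j. \<i> * complex_of_real (A $ i $ j))"

definition adjoint_mat :: "'n::finite cmat \<Rightarrow> 'n cmat" where
  "adjoint_mat M = (\<chi> i j. cnj (M $ j $ i))"

definition u_alg :: "'n::finite cmat set" where
  "u_alg = {M. adjoint_mat M = - M}"

definition su_alg :: "'n::finite cmat set" where
  "su_alg = {M. adjoint_mat M = - M \<and> trace M = 0}"

definition lie_gen :: "'n::finite cmat set \<Rightarrow> 'n cmat set" where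
  "lie_gen G = \<Inter> {V. subspace V \<and> G \<subseteq> V \<and> (\<forall>X\<in>V. \<forall>Y\<in>V. comm X Y \<in> V)}"

fun alt_word :: "'n::finite cmat \<Rightarrow> 'n cmat \<Rightarrow> nat list \<Rightarrow> 'n cmat \<Rightarrow> 'n cmat" where
  "alt_word X Y [] M = M"
| "alt_word X Y (k # ks) M = (ad X ^^ k) (alt_word Y X ks M)"

end

theory Submission
  imports Defs
begin

text \<open>The words span a real subspace \<open>S\<close> containing \<open>[iA, iL]\<close> and stable under
  \<open>ad\<^sub>i\<^sub>A\<close> and \<open>ad\<^sub>i\<^sub>L\<close>. By the Jacobi identity \<open>S\<close> is then stable under the whole Lie
  algebra \<open>g\<close> generated by \<open>iA, iL\<close>, and it contains \<open>[g, g]\<close>. Here \<open>g = u(n)\<close>, and every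
  traceless skew-Hermitian matrix is a sum of commutators of skew-Hermitian matrices: its
  off-diagonal part is \<open>[D, X]\<close> for a diagonal \<open>D\<close> with distinct entries, and its diagonal
  part is a combination of \<open>[E\<^sub>p\<^sub>q - E\<^sub>q\<^sub>p, i(E\<^sub>p\<^sub>q + E\<^sub>q\<^sub>p)] = 2i(E\<^sub>p\<^sub>p - E\<^sub>q\<^sub>q)\<close>.
  Conversely every word is a commutator in \<open>g\<close>, hence traceless and skew-Hermitian.\<close>

lemma matrix_mult_diff_left: "(A::'n::finite cmat) ** (B - C) = A ** B - A ** C"
  by (simp add: vec_eq_iff matrix_matrix_mult_def sum_subtractf algebra_simps)

lemma matrix_mult_diff_right: "((B::'n::finite cmat) - C) ** A = B ** A - C ** A"
  by (simp add: vec_eq_iff matrix_matrix_mult_def sum_subtractf algebra_simps)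

lemma matrix_mult_add_right: "((B::'n::finite cmat) + C) ** A = B ** A + C ** A"
  by (simp add: vec_eq_iff matrix_matrix_mult_def sum.distrib algebra_simps)

lemma comm_add_right: "comm X (Y + Z) = comm X Y + comm X Z"
  unfolding comm_def by (simp add: matrix_add_ldistrib matrix_mult_add_right)

lemma comm_add_left: "comm (Y + Z) X = comm Y X + comm Z X"
  unfolding comm_def by (simp add: matrix_add_ldistrib matrix_mult_add_right)

lemma comm_scaleR_right: "comm X (c *\<^sub>R Y) = c *\<^sub>R comm X Y"
  unfolding comm_def by (simp add: matrix_scalar_ac scalar_matrix_assoc algebra_simps)

lemma comm_scaleR_left: "comm (c *\<^sub>R Y) X = c *\<^sub>R comm Y X"
  unfolding comm_def by (simp add: matrix_scalar_ac scalar_matrix_assoc algebra_simps)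

lemma comm_antisym: "comm X Y = - comm Y X"
  unfolding comm_def by simp

lemma comm_zero_left [simp]: "comm 0 X = 0" and comm_zero_right [simp]: "comm X 0 = 0"
  unfolding comm_def by simp_all

lemma comm_self [simp]: "comm X X = 0"
  unfolding comm_def by simp

lemma comm_jacobi: "comm (comm X Y) Z = comm X (comm Y Z) - comm Y (comm X Z)"
  unfolding comm_def by (simp add: matrix_mult_diff_left matrix_mult_diff_right matrix_mul_assoc)

lemma linear_comm: "linear (comm X)"
  by (rule linearI) (simp_all add: comm_add_right comm_scaleR_right)

lemma trace_comm: "trace (comm X Y) = 0"
  unfolding comm_def using trace_mul_sym[of X Y] by (simp add: trace_sub)

lemma subspace_lie_gen: "subspace (lie_gen G)"
  unfolding lie_gen_def by (rule subspace_Inter) auto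

lemma lie_gen_superset: "G \<subseteq> lie_gen G"
  unfolding lie_gen_def by auto

lemma lie_gen_comm: "X \<in> lie_gen G \<Longrightarrow> Y \<in> lie_gen G \<Longrightarrow> comm X Y \<in> lie_gen G"
  unfolding lie_gen_def by auto

lemma lie_gen_minimal:
  "subspace V \<Longrightarrow> G \<subseteq> V \<Longrightarrow> (\<And>X Y. X \<in> V \<Longrightarrow> Y \<in> V \<Longrightarrow> comm X Y \<in> V) \<Longrightarrow> lie_gen G \<subseteq> V"
  unfolding lie_gen_def by auto

lemma alt_word_mem:
  assumes "\<And>Z. Z \<in> V \<Longrightarrow> comm X Z \<in> V" and "\<And>Z. Z \<in> V \<Longrightarrow> comm Y Z \<in> V" and "M \<in> V"
  shows "alt_word X Y ks M \<in> V"
  using assms(1,2)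
proof (induction ks arbitrary: X Y)
  case Nil
  then show ?case using assms(3) by simp
next
  case (Cons k ks)
  have "(ad X ^^ j) Z \<in> V" if "Z \<in> V" for j Z
    using that Cons.prems(1) by (induction j) (simp_all add: ad_def)
  then show ?case using Cons by simp
qed

lemma comm_alt_word_fst: "comm X (alt_word X Y ks M) = alt_word X Y (1 # 0 # ks) M"
  by (simp add: ad_def)

lemma comm_alt_word_snd: "comm Y (alt_word X Y ks M) = alt_word X Y (0 # 1 # ks) M"
  by (simp add: ad_def)

lemma span_comm_stable:
  assumes "\<And>w. w \<in> W \<Longrightarrow> comm X w \<in> W" and "Z \<in> span W"
  shows "comm X Z \<in> span W"
proof -
  have "comm X Z \<in> comm X ` span W" using assms(2) by blast
  also have "\<dots> = span (comm X ` W)" by (rule span_linear_image[OF linear_comm, symmetric])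
  also have "\<dots> \<subseteq> span W" by (rule span_mono) (use assms(1) in blast)
  finally show ?thesis .
qed

lemma span_alt_words_comm_stable:
  fixes X Y M :: "'n::finite cmat"
  defines "W \<equiv> {alt_word X Y ks M | ks. True}"
  assumes "Z \<in> span W"
  shows "comm X Z \<in> span W" and "comm Y Z \<in> span W"
  using assms unfolding W_def
  by (auto intro!: span_comm_stable simp del: alt_word.simps
      simp: comm_alt_word_fst comm_alt_word_snd)

lemma lie_gen_comm_stable:
  assumes S: "subspace S"
    and SX: "\<And>Z. Z \<in> S \<Longrightarrow> comm X Z \<in> S" and SY: "\<And>Z. Z \<in> S \<Longrightarrow> comm Y Z \<in> S"
    and A: "A \<in> lie_gen {X, Y}" and Z: "Z \<in> S"
  shows "comm A Z \<in> S"
proof -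
  have "lie_gen {X, Y} \<subseteq> {A. \<forall>Z\<in>S. comm A Z \<in> S}"
  proof (rule lie_gen_minimal)
    show "subspace {A. \<forall>Z\<in>S. comm A Z \<in> S}"
      using S by (auto simp: subspace_def comm_add_left comm_scaleR_left)
    show "{X, Y} \<subseteq> {A. \<forall>Z\<in>S. comm A Z \<in> S}"
      using SX SY by auto
  next
    fix A B assume "A \<in> {A. \<forall>Z\<in>S. comm A Z \<in> S}" "B \<in> {A. \<forall>Z\<in>S. comm A Z \<in> S}"
    then show "comm A B \<in> {A. \<forall>Z\<in>S. comm A Z \<in> S}"
      using S by (auto simp: comm_jacobi subspace_diff)
  qed
  then show ?thesis using A Z by blast
qed

lemma comm_generators_lie_gen:
  assumes S: "subspace S"
    and SX: "\<And>Z. Z \<in> S \<Longrightarrow> comm X Z \<in> S" and SY: "\<And>Z. Z \<in> S \<Longrightarrow> comm Y Z \<in> S"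
    and XY: "comm X Y \<in> S" and A: "A \<in> lie_gen {X, Y}"
  shows "comm X A \<in> S \<and> comm Y A \<in> S"
proof -
  define R where "R = {Q. comm X Q \<in> S \<and> comm Y Q \<in> S} \<inter> lie_gen {X, Y}"
  have "lie_gen {X, Y} \<subseteq> R"
  proof (rule lie_gen_minimal)
    show "subspace R"
      unfolding R_def using S
      by (intro subspace_inter subspace_lie_gen) (auto simp: subspace_def comm_add_right comm_scaleR_right)
    have "comm Y X \<in> S" using XY S by (metis comm_antisym subspace_neg)
    then show "{X, Y} \<subseteq> R" using XY S lie_gen_superset[of "{X, Y}"]
      by (auto simp: R_def subspace_0)
  next
    fix A B assume A: "A \<in> R" and B: "B \<in> R"
    have "comm Z (comm A B) = comm A (comm Z B) - comm B (comm Z A)" for Z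
      using comm_jacobi[of Z A B] comm_antisym[of "comm Z A" B] by (simp add: algebra_simps)
    moreover have "comm A (comm Z B) \<in> S" "comm B (comm Z A) \<in> S" if "Z = X \<or> Z = Y" for Z
      using A B that by (auto simp: R_def intro: lie_gen_comm_stable[OF S SX SY])
    ultimately have "comm Z (comm A B) \<in> S" if "Z = X \<or> Z = Y" for Z
      using that S by (metis subspace_diff)
    then show "comm A B \<in> R" using A B by (auto simp: R_def lie_gen_comm)
  qed
  then show ?thesis using A by (auto simp: R_def)
qed

lemma lie_gen_comm_mem:
  assumes S: "subspace S"
    and SX: "\<And>Z. Z \<in> S \<Longrightarrow> comm X Z \<in> S" and SY: "\<And>Z. Z \<in> S \<Longrightarrow> comm Y Z \<in> S"
    and XY: "comm X Y \<in> S" and P: "P \<in> lie_gen {X, Y}" and Q: "Q \<in> lie_gen {X, Y}"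
  shows "comm P Q \<in> S"
proof -
  define T where "T = {P. \<forall>Q\<in>lie_gen {X, Y}. comm P Q \<in> S} \<inter> lie_gen {X, Y}"
  have "lie_gen {X, Y} \<subseteq> T"
  proof (rule lie_gen_minimal)
    show "subspace T"
      unfolding T_def using S
      by (intro subspace_inter subspace_lie_gen) (auto simp: subspace_def comm_add_left comm_scaleR_left)
    show "{X, Y} \<subseteq> T"
      using comm_generators_lie_gen[OF S SX SY XY] lie_gen_superset[of "{X, Y}"] by (auto simp: T_def)
  next
    fix A B assume "A \<in> T" "B \<in> T"
    then show "comm A B \<in> T"
      using S by (auto simp: T_def comm_jacobi lie_gen_comm intro!: subspace_diff)
  qed
  then show ?thesis using P Q by (auto simp: T_def)
qed

definition mat_unit :: "'n::finite \<Rightarrow> 'n \<Rightarrow> 'n cmat" where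
  "mat_unit p q = (\<chi> r s. if r = p \<and> s = q then 1 else 0)"

definition cscale :: "complex \<Rightarrow> 'n::finite cmat \<Rightarrow> 'n cmat" where
  "cscale c M = (\<chi> r s. c * M $ r $ s)"

definition skew_unit :: "'n::finite \<Rightarrow> 'n \<Rightarrow> 'n cmat" where
  "skew_unit p q = mat_unit p q - mat_unit q p"

definition isym_unit :: "'n::finite \<Rightarrow> 'n \<Rightarrow> 'n cmat" where
  "isym_unit p q = cscale \<i> (mat_unit p q + mat_unit q p)"

lemma mat_unit_mult: "mat_unit a b ** mat_unit c d = (if b = c then mat_unit a d else 0)"
  by (auto simp: mat_unit_def matrix_matrix_mult_def vec_eq_iff if_distrib[of "\<lambda>x. x * _"] sum.delta cong: if_cong)

lemma cscale_mult_left: "cscale c M ** N = cscale c (M ** N)"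
  by (simp add: cscale_def matrix_matrix_mult_def vec_eq_iff sum_distrib_left mult.assoc)

lemma cscale_mult_right: "M ** cscale c N = cscale c (M ** N)"
  by (simp add: cscale_def matrix_matrix_mult_def vec_eq_iff sum_distrib_left algebra_simps)

lemma cscale_diff: "cscale c M - cscale c N = cscale c (M - N)"
  by (simp add: cscale_def vec_eq_iff algebra_simps)

lemma cscale_zero [simp]: "cscale c 0 = 0"
  by (simp add: cscale_def vec_eq_iff)

lemma comm_skew_isym_unit: "comm (skew_unit p q) (isym_unit p q) = cscale (2 * \<i>) (mat_unit p p - mat_unit q q)"
proof (cases "p = q")
  case True
  then show ?thesis by (simp add: skew_unit_def)
next
  case False
  let ?E = mat_unit
  have "comm (skew_unit p q) (isym_unit p q)
      = cscale \<i> ((?E p q - ?E q p) ** (?E p q + ?E q p) - (?E p q + ?E q p) ** (?E p q - ?E q p))"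
    unfolding comm_def skew_unit_def isym_unit_def cscale_mult_left cscale_mult_right cscale_diff ..
  also have "\<dots> = cscale \<i> (2 *\<^sub>R (?E p p - ?E q q))"
    using False by (simp add: matrix_mult_diff_left matrix_mult_diff_right matrix_add_ldistrib
        matrix_mult_add_right mat_unit_mult algebra_simps scaleR_2)
  finally show ?thesis by (simp add: cscale_def vec_eq_iff scaleR_conv_of_real)
qed

lemma adjoint_mat_mat_unit: "adjoint_mat (mat_unit p q) = mat_unit q p"
  unfolding adjoint_mat_def mat_unit_def by (simp add: vec_eq_iff)

lemma adjoint_mat_diff: "adjoint_mat (M - N) = adjoint_mat M - adjoint_mat N"
  unfolding adjoint_mat_def by (simp add: vec_eq_iff)

lemma adjoint_mat_add: "adjoint_mat (M + N) = adjoint_mat M + adjoint_mat N"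
  unfolding adjoint_mat_def by (simp add: vec_eq_iff)

lemma adjoint_mat_cscale: "adjoint_mat (cscale c M) = cscale (cnj c) (adjoint_mat M)"
  unfolding adjoint_mat_def cscale_def by (simp add: vec_eq_iff)

lemma cscale_uminus: "cscale (- c) M = - cscale c M"
  unfolding cscale_def by (simp add: vec_eq_iff)

lemma skew_unit_u_alg: "skew_unit p q \<in> u_alg"
  unfolding u_alg_def skew_unit_def by (simp add: adjoint_mat_diff adjoint_mat_mat_unit)

lemma isym_unit_u_alg: "isym_unit p q \<in> u_alg"
  unfolding u_alg_def isym_unit_def
  by (simp add: adjoint_mat_cscale adjoint_mat_add adjoint_mat_mat_unit cscale_uminus add.commute)

lemma u_alg_component: "M \<in> u_alg \<Longrightarrow> cnj (M $ s $ r) = - M $ r $ s"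
  by (auto simp: u_alg_def adjoint_mat_def vec_eq_iff)

lemma comm_diagonal_component:
  "comm (\<chi> r s. if r = s then d r else 0) X $ r $ s = (d r - d s) * X $ r $ s"
proof -
  have "((\<chi> r s. if r = s then d r else 0) ** X) $ r $ s = d r * X $ r $ s"
    by (simp add: matrix_matrix_mult_def if_distrib[of "\<lambda>x. x * _"] cong: if_cong)
  moreover have "(X ** (\<chi> r s. if r = s then d r else 0)) $ r $ s = d s * X $ r $ s"
    by (simp add: matrix_matrix_mult_def if_distrib[of "\<lambda>x. _ * x"] cong: if_cong)
  ultimately show ?thesis by (simp add: comm_def algebra_simps)
qed

lemma off_diagonal_part_comm_u_alg:
  fixes M :: "'n::finite cmat"
  assumes M: "M \<in> u_alg"
  obtains D X where "D \<in> u_alg" "X \<in> u_alg" "comm D X = (\<chi> r s. if r = s then 0 else M $ r $ s)"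
proof -
  obtain f :: "'n \<Rightarrow> nat" where "inj f"
    using finite_imp_inj_to_nat_seg[of "UNIV :: 'n set"] by blast
  define d where "d r = \<i> * of_nat (f r)" for r
  have d_ne: "d r \<noteq> d s" if "r \<noteq> s" for r s
    using \<open>inj f\<close> that by (auto simp: d_def inj_on_def)
  have cnj_d: "cnj (d r) = - d r" for r
    by (simp add: d_def)
  define D :: "'n cmat" where "D = (\<chi> r s. if r = s then d r else 0)"
  define X :: "'n cmat" where "X = (\<chi> r s. if r = s then 0 else M $ r $ s / (d r - d s))"
  have "D \<in> u_alg"
    by (auto simp: u_alg_def adjoint_mat_def D_def d_def vec_eq_iff)
  moreover have "X \<in> u_alg"
    by (auto simp: u_alg_def adjoint_mat_def X_def vec_eq_iff cnj_d u_alg_component[OF M])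
  moreover have "comm D X = (\<chi> r s. if r = s then 0 else M $ r $ s)"
    by (simp add: D_def comm_diagonal_component vec_eq_iff X_def d_ne)
  ultimately show ?thesis by (rule that)
qed

lemma su_alg_subset_span_comm_u_alg:
  "su_alg \<subseteq> span {comm P Q | P Q. P \<in> u_alg \<and> Q \<in> (u_alg :: 'n::finite cmat set)}"
proof
  fix M :: "'n cmat"
  let ?C = "{comm P Q | P Q. P \<in> u_alg \<and> Q \<in> (u_alg :: 'n cmat set)}"
  assume "M \<in> su_alg"
  then have M: "M \<in> u_alg" and tr: "trace M = 0"
    by (auto simp: su_alg_def u_alg_def)
  obtain D X where DX: "D \<in> u_alg" "X \<in> u_alg"
    and off: "comm D X = (\<chi> r s. if r = s then 0 else M $ r $ s)"
    using off_diagonal_part_comm_u_alg[OF M] .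
  define t where "t p = Im (M $ p $ p)" for p
  have M_diag: "M $ r $ r = \<i> * of_real (t r)" for r
    using u_alg_component[OF M, of r r] by (auto simp: complex_eq_iff t_def)
  have t_sum: "(\<Sum>p\<in>UNIV. t p) = 0"
    using tr by (simp add: trace_def t_def flip: Im_sum)
  \<comment> \<open>Since the diagonal of \<open>M\<close> is \<open>i t\<close> with \<open>\<Sum> t = 0\<close>, it equals \<open>\<Sum>\<^sub>p i t\<^sub>p (E\<^sub>p\<^sub>p - E\<^sub>j\<^sub>j)\<close> for any fixed \<open>j\<close>.\<close>
  define j :: 'n where "j = undefined"
  define diag where "diag = (\<Sum>p\<in>UNIV. (t p / 2) *\<^sub>R comm (skew_unit p j) (isym_unit p j))"
  have diag_component: "diag $ r $ s = (if r = s then M $ r $ r else 0)" for r s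
  proof -
    have "diag $ r $ s = (\<Sum>p\<in>UNIV. if r = s then \<i> * of_real (t p) *
        ((if p = r then 1 else 0) - (if r = j then 1 else 0)) else 0)"
      unfolding diag_def sum_component
      by (intro sum.cong) (auto simp: comm_skew_isym_unit cscale_def mat_unit_def scaleR_conv_of_real[where 'a=complex])
    also have "\<dots> = (if r = s then \<i> * of_real (t r) - (if r = j then \<i> * of_real (\<Sum>p\<in>UNIV. t p) else 0) else 0)"
      by (simp add: algebra_simps sum_subtractf sum_distrib_left if_distrib[of "\<lambda>x. _ * x"] cong: if_cong)
    finally show ?thesis by (simp add: t_sum M_diag)
  qed
  have "M = comm D X + diag"
    by (simp add: vec_eq_iff off diag_component)
  moreover have "comm D X \<in> span ?C"
    using DX by (auto intro: span_base)
  moreover have "diag \<in> span ?C"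
    unfolding diag_def using skew_unit_u_alg isym_unit_u_alg by (fast intro: span_sum span_scale span_base)
  ultimately show "M \<in> span ?C"
    by (simp add: span_add)
qed

lemma su_alg_eq_traceless_u_alg: "su_alg = u_alg \<inter> {M. trace M = 0}"
  by (auto simp: su_alg_def u_alg_def)

lemma subspace_traceless: "subspace {M :: 'n::finite cmat. trace M = 0}"
  by (auto simp: subspace_def trace_def sum.distrib simp flip: scaleR_sum_right)

theorem lemma2p3:
  fixes A L :: "real^'n^'n"
  assumes "transpose A = A" and "transpose L = L"
    and "lie_gen {imat A, imat L} = u_alg"
  shows "span {alt_word (imat A) (imat L) ks (comm (imat A) (imat L)) | ks. True} = su_alg"
proof -
  let ?X = "imat A" and ?Y = "imat L"
  let ?g = "lie_gen {?X, ?Y}"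
  define S where "S = span {alt_word ?X ?Y ks (comm ?X ?Y) | ks. True}"
  have su: "su_alg = ?g \<inter> {M. trace M = 0}"
    using su_alg_eq_traceless_u_alg assms(3) by simp
  have X: "?X \<in> ?g" and Y: "?Y \<in> ?g"
    using lie_gen_superset by blast+
  have subspace_S: "subspace S"
    unfolding S_def by (rule subspace_span)
  have SX: "comm ?X Z \<in> S" and SY: "comm ?Y Z \<in> S" if "Z \<in> S" for Z
    using span_alt_words_comm_stable[OF that[unfolded S_def]] unfolding S_def by auto
  have "comm ?X ?Y = alt_word ?X ?Y [] (comm ?X ?Y)"
    by simp
  then have XY: "comm ?X ?Y \<in> S"
    unfolding S_def by (blast intro: span_base)
  have "alt_word ?X ?Y ks (comm ?X ?Y) \<in> ?g \<inter> {M. trace M = 0}" for ks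
    by (rule alt_word_mem) (auto simp: X Y lie_gen_comm trace_comm)
  then have "S \<subseteq> su_alg"
    unfolding S_def su
    by (intro span_minimal subspace_inter subspace_lie_gen subspace_traceless) blast
  moreover have "{comm P Q | P Q. P \<in> u_alg \<and> Q \<in> u_alg} \<subseteq> S"
    using lie_gen_comm_mem[OF subspace_S SX SY XY] assms(3) by blast
  then have "su_alg \<subseteq> S"
    using su_alg_subset_span_comm_u_alg span_minimal[OF _ subspace_S] by blast
  ultimately show ?thesis unfolding S_def by blast
qed

end
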